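(* Let $p_0>0$ and $r>1$, and run the multiplicative price update algorithm on truthful input (true types $(v_i,\mathcal S_i)$) in a fixed order $i=1,\dots,n$, obtaining $S=(S_1,\dots,S_n)$. For each good $e$ let $\ell_e^*=|\{i: e\in S_i\}|$ and $p_e^*=p_0 r^{\ell_e^*}$, and let $v(S)=\sum_{i=1}^n v_i(S_i)$. Then $$v(S)\ge \frac{1}{r-1}\Big(\sum_{e\in\mathsf U}p_e^*-m p_0\Big)\qquad\text{and}\qquad v(S)\ge \mathrm{OPT}-b\sum_{e\in\mathsf U}p_e^*,$$ where $\mathrm{OPT}$ is the maximum of $\sum_i v_i(T_i)$ over all allocations $(T_1,\dots,T_n)$ in which every good belongs to at most $b$ of the sets $T_i$.
   Context: Multi-unit combinatorial auction: a set $\mathsf U$ of $m$ goods, each available in $b\ge1$ copies; $n$ bidders, bidder $i$ having a collection $\mathcal S_i$ of $k$ nonempty subsets of $\mathsf U$ and valuation $v_i:\mathcal S_i\to\mathbb R_{\ge0}$, extended to all $T\subseteq\mathsf U$ by $v_i(T)=\max\{v_i(S'):S'\in\mathcal S_i, S'\subseteq T\}$ ($0$ if none). Multiplicative price update algorithm (parameters $p_0,r$): set $p_e^1=p_0$ for all goods $e$; for $i=1,\dots,n$: let $S_i$ be a set maximizing $v_i(S)$ among $S\in\mathcal S_i$ with $v_i(S)\ge\sum_{e\in S}p_e^i$ ($S_i=\emptyset$ if there is none); set $p_e^{i+1}=r\,p_e^i$ for $e\in S_i$ and $p_e^{i+1}=p_e^i$ otherwise; output $(S_1,\dots,S_n)$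 (which need not respect the supply $b$). *)

theory Defs
  imports Main "HOL-Library.Extended_Real" Complex_Main
begin

definition vext :: "'g set set \<Rightarrow> ('g set \<Rightarrow> real) \<Rightarrow> 'g set \<Rightarrow> real" where
  "vext Sf v T = (if \<exists>S'\<in>Sf. S' \<subseteq> T then Max (v ` {S'\<in>Sf. S' \<subseteq> T}) else 0)"

text \<open>Price of good e seen by bidder i (0-indexed) given the earlier choices S_0..S_{i-1}.\<close>
definition price :: "real \<Rightarrow> real \<Rightarrow> (nat \<Rightarrow> 'g set) \<Rightarrow> nat \<Rightarrow> 'g \<Rightarrow> real" where
  "price p0 r S i e = p0 * r ^ card {j. j < i \<and> e \<in> S j}"

text \<open>S is a possible output of the multiplicative price update algorithm
  (bidders 0..n-1 in this order; ties in the maximisation broken arbitrarily).\<close>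
definition mpu_run ::
  "real \<Rightarrow> real \<Rightarrow> nat \<Rightarrow> (nat \<Rightarrow> 'g set set) \<Rightarrow> (nat \<Rightarrow> 'g set \<Rightarrow> real) \<Rightarrow> (nat \<Rightarrow> 'g set) \<Rightarrow> bool" where
  "mpu_run p0 r n Sf v S \<longleftrightarrow>
     (\<forall>i<n. let afford = {T \<in> Sf i. v i T \<ge> (\<Sum>e\<in>T. price p0 r S i e)} in
        (afford = {} \<and> S i = {}) \<or>
        (S i \<in> afford \<and> (\<forall>T\<in>afford. v i T \<le> v i (S i))))"

definition OPT ::
  "'g set \<Rightarrow> nat \<Rightarrow> nat \<Rightarrow> (nat \<Rightarrow> 'g set set) \<Rightarrow> (nat \<Rightarrow> 'g set \<Rightarrow> real) \<Rightarrow> real" where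
  "OPT U b n Sf v = Max {(\<Sum>i<n. vext (Sf i) (v i) (T i)) | T.
       (\<forall>i<n. T i \<subseteq> U) \<and> (\<forall>e\<in>U. card {i. i < n \<and> e \<in> T i} \<le> b)}"

end

theory Submission
  imports Defs "HOL-Library.FuncSet"
begin

text \<open>Prices telescope: each purchase of a good multiplies its price by r, so the total
  increase of the prices, (r - 1) times the revenue at the posted prices, is at most (r - 1)
  times the welfare, as every bidder pays at most her value. For the second bound, every bidder
  prefers her choice to any set of an allocation T, at prices bounded by the final prices p*;
  summing over bidders, each good is counted at most b times in T.\<close>

lemma vext_ge: "finite Sf \<Longrightarrow> T' \<in> Sf \<Longrightarrow> T' \<subseteq> T \<Longrightarrow> v T' \<le> vext Sf v T"
  unfolding vext_def by (auto intro!: Max_ge)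

lemma vext_nonneg:
  assumes "finite Sf" and "\<And>T. T \<in> Sf \<Longrightarrow> v T \<ge> 0"
  shows "vext Sf v T \<ge> 0"
proof (cases "\<exists>S'\<in>Sf. S' \<subseteq> T")
  case True
  then obtain S' where "S' \<in> Sf" "S' \<subseteq> T" by blast
  then show ?thesis using vext_ge[OF assms(1), of S' T v] assms(2)[of S'] by linarith
qed (simp add: vext_def)

lemma vext_zero_or_attained:
  assumes "finite Sf"
  shows "vext Sf v T = 0 \<or> (\<exists>T'\<in>Sf. T' \<subseteq> T \<and> vext Sf v T = v T')"
proof (cases "\<exists>S'\<in>Sf. S' \<subseteq> T")
  case True
  then have "Max (v ` {S'\<in>Sf. S' \<subseteq> T}) \<in> v ` {S'\<in>Sf. S' \<subseteq> T}"
    using assms by (intro Max_in) auto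
  then obtain T' where "T' \<in> Sf" "T' \<subseteq> T" "Max (v ` {S'\<in>Sf. S' \<subseteq> T}) = v T'"
    by blast
  then show ?thesis using True unfolding vext_def by auto
qed (simp add: vext_def)

lemma price_Suc: "price p0 r S (Suc i) e = (if e \<in> S i then r else 1) * price p0 r S i e"
proof -
  have "{j. j < Suc i \<and> e \<in> S j} = {j. j < i \<and> e \<in> S j} \<union> (if e \<in> S i then {i} else {})"
    by (auto simp: less_Suc_eq)
  then show ?thesis by (simp add: price_def)
qed

lemma price_nonneg: "p0 \<ge> 0 \<Longrightarrow> r \<ge> 0 \<Longrightarrow> price p0 r S i e \<ge> 0"
  unfolding price_def by simp

lemma price_mono:
  assumes "p0 \<ge> 0" and "r \<ge> 1" and "i \<le> i'"
  shows "price p0 r S i e \<le> price p0 r S i' e"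
proof -
  have "card {j. j < i \<and> e \<in> S j} \<le> card {j. j < i' \<and> e \<in> S j}"
    using assms(3) by (intro card_mono) auto
  then show ?thesis
    unfolding price_def using assms by (intro mult_left_mono power_increasing) auto
qed

lemma price_telescope:
  "price p0 r S n e - p0 = (\<Sum>i<n. if e \<in> S i then (r - 1) * price p0 r S i e else 0)"
proof (induction n)
  case 0 then show ?case by (simp add: price_def)
next
  case (Suc n) then show ?case by (simp add: price_Suc algebra_simps)
qed

lemma sum_if_mem_subset:
  "finite U \<Longrightarrow> A \<subseteq> U \<Longrightarrow> (\<Sum>x\<in>U. if x \<in> A then f x else 0) = sum f A"
  by (simp add: sum.inter_filter[symmetric] Int_absorb1 Int_def[symmetric])

lemma sum_final_prices_growth:
  fixes p0 r :: real
  assumes "finite U" and "\<And>i. i < n \<Longrightarrow> S i \<subseteq> U"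
  shows "(\<Sum>e\<in>U. price p0 r S n e) - card U * p0
           = (r - 1) * (\<Sum>i<n. \<Sum>e\<in>S i. price p0 r S i e)"
proof -
  have "(\<Sum>e\<in>U. price p0 r S n e) - card U * p0 = (\<Sum>e\<in>U. price p0 r S n e - p0)"
    by (simp add: sum_subtractf)
  also have "\<dots> = (\<Sum>e\<in>U. \<Sum>i<n. if e \<in> S i then (r - 1) * price p0 r S i e else 0)"
    by (simp only: price_telescope)
  also have "\<dots> = (\<Sum>i<n. \<Sum>e\<in>U. if e \<in> S i then (r - 1) * price p0 r S i e else 0)"
    by (rule sum.swap)
  also have "\<dots> = (\<Sum>i<n. (r - 1) * (\<Sum>e\<in>S i. price p0 r S i e))"
    using assms by (simp add: sum_if_mem_subset sum_distrib_left)
  finally show ?thesis by (simp add: sum_distrib_left)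
qed

lemma sum_family_le_load_bound:
  fixes f :: "'a \<Rightarrow> real" and n b :: nat
  assumes "finite U" and "\<And>i. i < n \<Longrightarrow> T i \<subseteq> U"
    and "\<And>e. e \<in> U \<Longrightarrow> card {i. i < n \<and> e \<in> T i} \<le> b"
    and "\<And>e. e \<in> U \<Longrightarrow> f e \<ge> 0"
  shows "(\<Sum>i<n. \<Sum>e\<in>T i. f e) \<le> b * (\<Sum>e\<in>U. f e)"
proof -
  have "(\<Sum>i<n. \<Sum>e\<in>T i. f e) = (\<Sum>i<n. \<Sum>e\<in>U. if e \<in> T i then f e else 0)"
    using assms(1,2) by (simp add: sum_if_mem_subset)
  also have "\<dots> = (\<Sum>e\<in>U. \<Sum>i<n. if e \<in> T i then f e else 0)"
    by (rule sum.swap)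
  also have "\<dots> = (\<Sum>e\<in>U. card {i. i < n \<and> e \<in> T i} * f e)"
  proof (rule sum.cong[OF refl])
    fix e
    have "(\<Sum>i<n. if e \<in> T i then f e else 0)
        = (\<Sum>i<n. if i \<in> {i. i < n \<and> e \<in> T i} then f e else 0)"
      by (rule sum.cong) auto
    also have "\<dots> = (\<Sum>i\<in>{i. i < n \<and> e \<in> T i}. f e)"
      by (rule sum_if_mem_subset) auto
    finally show "(\<Sum>i<n. if e \<in> T i then f e else 0) = card {i. i < n \<and> e \<in> T i} * f e"
      by simp
  qed
  also have "\<dots> \<le> (\<Sum>e\<in>U. b * f e)"
    using assms(3,4) by (intro sum_mono mult_right_mono) auto
  finally show ?thesis by (simp add: sum_distrib_left)
qed

lemma OPT_attained:
  assumes "finite U"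
  obtains T where "\<And>i. i < n \<Longrightarrow> T i \<subseteq> U"
    and "\<And>e. e \<in> U \<Longrightarrow> card {i. i < n \<and> e \<in> T i} \<le> b"
    and "OPT U b n Sf v = (\<Sum>i<n. vext (Sf i) (v i) (T i))"
proof -
  define W where "W T = (\<Sum>i<n. vext (Sf i) (v i) (T i))" for T
  define Opts where "Opts = {W T | T. (\<forall>i<n. T i \<subseteq> U) \<and> (\<forall>e\<in>U. card {i. i < n \<and> e \<in> T i} \<le> b)}"
  \<comment> \<open>Only the restriction of an allocation to the bidders matters, so finitely many values occur.\<close>
  have "Opts \<subseteq> W ` (PiE {..<n} (\<lambda>_. Pow U))"
  proof
    fix x assume "x \<in> Opts"
    then obtain T where x: "x = W T" and T: "\<forall>i<n. T i \<subseteq> U" unfolding Opts_def by auto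
    have "W T = W (restrict T {..<n})" unfolding W_def by simp
    moreover have "restrict T {..<n} \<in> PiE {..<n} (\<lambda>_. Pow U)" using T by auto
    ultimately show "x \<in> W ` (PiE {..<n} (\<lambda>_. Pow U))" unfolding x by blast
  qed
  moreover have "finite (W ` (PiE {..<n} (\<lambda>_. Pow U)))"
    using assms by (intro finite_imageI finite_PiE) auto
  ultimately have "finite Opts" by (rule finite_subset)
  moreover have "W (\<lambda>_. {}) \<in> Opts" unfolding Opts_def by auto
  ultimately have "Max Opts \<in> Opts" by (intro Max_in) auto
  moreover have "OPT U b n Sf v = Max Opts" unfolding OPT_def Opts_def W_def by simp
  ultimately obtain T where "\<forall>i<n. T i \<subseteq> U" "\<forall>e\<in>U. card {i. i < n \<and> e \<in> T i} \<le> b"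
    and "OPT U b n Sf v = W T"
    unfolding Opts_def by auto
  then show ?thesis using that unfolding W_def by blast
qed

definition affordable ::
  "real \<Rightarrow> real \<Rightarrow> (nat \<Rightarrow> 'g set set) \<Rightarrow> (nat \<Rightarrow> 'g set \<Rightarrow> real) \<Rightarrow> (nat \<Rightarrow> 'g set) \<Rightarrow> nat \<Rightarrow> 'g set set"
  where "affordable p0 r Sf v S i = {T \<in> Sf i. v i T \<ge> (\<Sum>e\<in>T. price p0 r S i e)}"

lemma mpu_runD:
  assumes "mpu_run p0 r n Sf v S" and "i < n"
  shows "(affordable p0 r Sf v S i = {} \<and> S i = {})
    \<or> (S i \<in> affordable p0 r Sf v S i \<and> (\<forall>T\<in>affordable p0 r Sf v S i. v i T \<le> v i (S i)))"
  using assms unfolding mpu_run_def affordable_def Let_def by blast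

lemma mpu_run_choice:
  "mpu_run p0 r n Sf v S \<Longrightarrow> i < n \<Longrightarrow> S i = {} \<or> S i \<in> Sf i"
  using mpu_runD[of p0 r n Sf v S i] unfolding affordable_def by blast

lemma mpu_run_pays_at_most_value:
  assumes "mpu_run p0 r n Sf v S" and "i < n"
    and "finite (Sf i)" and "\<And>T. T \<in> Sf i \<Longrightarrow> v i T \<ge> 0"
  shows "(\<Sum>e\<in>S i. price p0 r S i e) \<le> vext (Sf i) (v i) (S i)"
  using mpu_runD[OF assms(1,2)]
proof
  assume "affordable p0 r Sf v S i = {} \<and> S i = {}"
  then show ?thesis using vext_nonneg[OF assms(3,4)] by simp
next
  assume "S i \<in> affordable p0 r Sf v S i \<and> (\<forall>T\<in>affordable p0 r Sf v S i. v i T \<le> v i (S i))"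
  then have "S i \<in> Sf i" and "(\<Sum>e\<in>S i. price p0 r S i e) \<le> v i (S i)"
    unfolding affordable_def by auto
  moreover note vext_ge[OF assms(3) \<open>S i \<in> Sf i\<close> subset_refl, of "v i"]
  ultimately show ?thesis by linarith
qed

lemma mpu_run_no_profitable_deviation:
  assumes "mpu_run p0 r n Sf v S" and "i < n"
    and "finite (Sf i)" and "\<And>T. T \<in> Sf i \<Longrightarrow> v i T \<ge> 0"
    and "p0 \<ge> 0" and "r \<ge> 0" and "T \<in> Sf i"
  shows "v i T \<le> vext (Sf i) (v i) (S i) + (\<Sum>e\<in>T. price p0 r S i e)"
proof (cases "T \<in> affordable p0 r Sf v S i")
  case True
  then have "S i \<in> Sf i" and "v i T \<le> v i (S i)"
    using mpu_runD[OF assms(1,2)] unfolding affordable_def by auto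
  moreover have "(\<Sum>e\<in>T. price p0 r S i e) \<ge> 0"
    using assms(5,6) by (simp add: sum_nonneg price_nonneg)
  moreover note vext_ge[OF assms(3) \<open>S i \<in> Sf i\<close> subset_refl, of "v i"]
  ultimately show ?thesis by linarith
next
  case False
  then have "v i T < (\<Sum>e\<in>T. price p0 r S i e)"
    using assms(7) unfolding affordable_def by auto
  moreover have "vext (Sf i) (v i) (S i) \<ge> 0"
    using assms(3,4) by (rule vext_nonneg)
  ultimately show ?thesis by linarith
qed

lemma mpu_run_vext_le_final_prices:
  assumes "mpu_run p0 r n Sf v S" and "i < n"
    and "finite (Sf i)" and "\<And>T. T \<in> Sf i \<Longrightarrow> v i T \<ge> 0"
    and "p0 \<ge> 0" and "r \<ge> 1" and "finite T"
  shows "vext (Sf i) (v i) T \<le> vext (Sf i) (v i) (S i) + (\<Sum>e\<in>T. price p0 r S n e)"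
proof -
  have final_nonneg: "(\<Sum>e\<in>A. price p0 r S n e) \<ge> 0" for A
    using assms(5,6) by (simp add: sum_nonneg price_nonneg)
  from vext_zero_or_attained[OF assms(3)] show ?thesis
  proof
    assume "vext (Sf i) (v i) T = 0"
    then show ?thesis using vext_nonneg[OF assms(3,4)] final_nonneg[of T] by simp
  next
    assume "\<exists>T'\<in>Sf i. T' \<subseteq> T \<and> vext (Sf i) (v i) T = v i T'"
    then obtain T' where T': "T' \<in> Sf i" "T' \<subseteq> T" "vext (Sf i) (v i) T = v i T'" by blast
    have "v i T' \<le> vext (Sf i) (v i) (S i) + (\<Sum>e\<in>T'. price p0 r S i e)"
      using mpu_run_no_profitable_deviation[OF assms(1-5)] assms(6) T'(1) by simp
    also have "(\<Sum>e\<in>T'. price p0 r S i e) \<le> (\<Sum>e\<in>T'. price p0 r S n e)"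
      using assms(2,5,6) by (intro sum_mono price_mono) auto
    also have "\<dots> \<le> (\<Sum>e\<in>T. price p0 r S n e)"
      using assms(5-7) T'(2) by (intro sum_mono2) (auto simp: price_nonneg)
    finally show ?thesis using T'(3) by simp
  qed
qed

theorem lemma2:
  fixes U :: "'g set" and m b n k :: nat
    and Sf :: "nat \<Rightarrow> 'g set set" and v :: "nat \<Rightarrow> 'g set \<Rightarrow> real"
    and p0 r :: real and S :: "nat \<Rightarrow> 'g set"
  assumes "finite U" and "card U = m" and "b \<ge> 1"
    and "\<And>i. i < n \<Longrightarrow> Sf i \<subseteq> Pow U - {{}}"
    and "\<And>i. i < n \<Longrightarrow> card (Sf i) = k"
    and "\<And>i T. i < n \<Longrightarrow> T \<in> Sf i \<Longrightarrow> v i T \<ge> 0"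
    and "p0 > 0" and "r > 1"
    and "mpu_run p0 r n Sf v S"
  shows "(\<Sum>i<n. vext (Sf i) (v i) (S i))
           \<ge> (1 / (r - 1)) * ((\<Sum>e\<in>U. p0 * r ^ card {i. i < n \<and> e \<in> S i}) - m * p0)
    \<and> (\<Sum>i<n. vext (Sf i) (v i) (S i))
           \<ge> OPT U b n Sf v - b * (\<Sum>e\<in>U. p0 * r ^ card {i. i < n \<and> e \<in> S i})"
proof -
  define V where "V = (\<Sum>i<n. vext (Sf i) (v i) (S i))"
  define P where "P = (\<Sum>e\<in>U. price p0 r S n e)"
  have fin_Sf: "finite (Sf i)" if "i < n" for i
    using assms(1) assms(4)[OF that] by (meson Diff_subset finite_Pow_iff finite_subset subset_trans)
  have S_sub: "S i \<subseteq> U" if "i < n" for i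
    using mpu_run_choice[OF assms(9) that] assms(4)[OF that] by auto
  have "P - m * p0 = (r - 1) * (\<Sum>i<n. \<Sum>e\<in>S i. price p0 r S i e)"
    unfolding P_def assms(2)[symmetric] using sum_final_prices_growth[OF assms(1) S_sub] .
  also have "\<dots> \<le> (r - 1) * V"
    unfolding V_def using assms(8) mpu_run_pays_at_most_value[OF assms(9) _ fin_Sf assms(6)]
    by (intro mult_left_mono sum_mono) auto
  finally have welfare_bound: "(1 / (r - 1)) * (P - m * p0) \<le> V"
    using assms(8) by (simp add: field_simps)
  obtain T where T: "\<And>i. i < n \<Longrightarrow> T i \<subseteq> U"
    and load: "\<And>e. e \<in> U \<Longrightarrow> card {i. i < n \<and> e \<in> T i} \<le> b"
    and opt: "OPT U b n Sf v = (\<Sum>i<n. vext (Sf i) (v i) (T i))"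
    using OPT_attained[OF assms(1)] by blast
  have "OPT U b n Sf v \<le> (\<Sum>i<n. vext (Sf i) (v i) (S i) + (\<Sum>e\<in>T i. price p0 r S n e))"
    unfolding opt using assms(1,7,8) T
    by (intro sum_mono mpu_run_vext_le_final_prices[OF assms(9) _ fin_Sf assms(6)])
      (auto intro: finite_subset)
  also have "\<dots> \<le> V + b * P"
    unfolding V_def P_def sum.distrib using assms(7,8)
    by (intro add_left_mono sum_family_le_load_bound[OF assms(1) T load]) (auto intro!: price_nonneg)
  finally show ?thesis
    using welfare_bound unfolding V_def P_def price_def by simp
qed

end
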